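(* Let $r, J, L \ge 1$ be integers. Let $\mathbf{H}(X) = [h_{j,l}(X)]_{j \in [J], l \in [L]}$ be a $J \times L$ matrix whose entries are elements of $\mathbb{F}_2[X]/\langle X^r - 1\rangle$, each of which is either $0$, a monomial $X^{a}$, or a binomial $X^{a} + X^{b}$ with $a \not\equiv b \pmod r$. Let $H$ be the associated $Jr \times Lr$ binary parity-check matrix, and assume $H$ has constant column weight and constant row weight. For each $j,l$ let $E_{j,l} \subseteq \mathbb{Z}_r$ be the set of exponents occurring in $h_{j,l}(X)$. For $i, j \in [J]$ let $\mathbf{d}_{ij}$ be the multiset $\{(e - e') \bmod r : l \in [L],\ e \in E_{i,l},\ e' \in E_{j,l}\}$, where, when $i = j$, the pairs with $e = e'$ are excluded. Then the code $C(H)$ has girth $g \ge 6$ if and only if $\mathbf{d}_{ij}$ is multiplicity free for all $i, j \in [J]$.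
   Context: The binary matrix $H$ associated with $\mathbf{H}(X)$ is obtained by replacing each entry $h_{j,l}(X) = \sum_{s=0}^{r-1} c_s X^s$ by the $r\times r$ binary circulant matrix with first row $(c_0,\ldots,c_{r-1})$ (each subsequent row being the cyclic right shift by one of the previous row). $C(H)$ is the null space of $H$. A cycle of length $2s$ in $H$ is an ordered list of $2s$ positions of $H$ such that all these entries equal $1$, consecutive positions alternately share a row (with different columns) or share a column (with different rows), and all $2s$ positions are distinct except that the first and last coincide; the girth of the code is the length of a shortest cycle (infinite if there is none). A multiset is multiplicity free if no element occurs more than once. $[J]=\{1,\ldots,J\}$. *)

theory Defs
  imports Main "HOL-Library.Multiset" "HOL-Library.Extended_Nat"
begin

text \<open>An entry h_{j,l}(X) of the polynomial matrix over F_2[X]/(X^r - 1) is represented by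
  its set of exponents E j l, a subset of {0..<r} (coefficient c_s = 1 iff s in E j l).
  Block indices j, l are 0-based: j < J, l < L.\<close>

text \<open>Binary matrix H (Jr x Lr, 0-based row x and column y): the block (x div r, y div r)
  is the circulant with first row c, so entry (a,b) of the block equals c_{(b - a) mod r}.\<close>
definition Hmat :: "nat \<Rightarrow> (nat \<Rightarrow> nat \<Rightarrow> nat set) \<Rightarrow> nat \<Rightarrow> nat \<Rightarrow> bool" where
  "Hmat r E x y = ((y mod r + r - x mod r) mod r \<in> E (x div r) (y div r))"

definition same_row :: "nat \<times> nat \<Rightarrow> nat \<times> nat \<Rightarrow> bool" where
  "same_row p q = (fst p = fst q \<and> snd p \<noteq> snd q)"

definition same_col :: "nat \<times> nat \<Rightarrow> nat \<times> nat \<Rightarrow> bool" where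
  "same_col p q = (snd p = snd q \<and> fst p \<noteq> fst q)"

definition is_cycle :: "nat \<Rightarrow> nat \<Rightarrow> (nat \<Rightarrow> nat \<Rightarrow> bool) \<Rightarrow> nat \<Rightarrow> (nat \<times> nat) list \<Rightarrow> bool" where
  "is_cycle m n M s ps =
     (s \<ge> 1 \<and> length ps = 2 * s + 1 \<and> hd ps = last ps \<and> distinct (butlast ps) \<and>
      (\<forall>p \<in> set ps. fst p < m \<and> snd p < n \<and> M (fst p) (snd p)) \<and>
      ((\<forall>k < 2 * s. if even k then same_row (ps ! k) (ps ! Suc k) else same_col (ps ! k) (ps ! Suc k)) \<or>
       (\<forall>k < 2 * s. if even k then same_col (ps ! k) (ps ! Suc k) else same_row (ps ! k) (ps ! Suc k))))"

text \<open>Girth: length of a shortest cycle, \<infinity> if there is none (Inf {} = \<infinity> in enat).\<close>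
definition girth :: "nat \<Rightarrow> nat \<Rightarrow> (nat \<Rightarrow> nat \<Rightarrow> bool) \<Rightarrow> enat" where
  "girth m n M = Inf {enat (2 * s) | s. \<exists>ps. is_cycle m n M s ps}"

definition const_col_weight :: "nat \<Rightarrow> nat \<Rightarrow> (nat \<Rightarrow> nat \<Rightarrow> bool) \<Rightarrow> bool" where
  "const_col_weight m n M = (\<exists>w. \<forall>y < n. card {x. x < m \<and> M x y} = w)"

definition const_row_weight :: "nat \<Rightarrow> nat \<Rightarrow> (nat \<Rightarrow> nat \<Rightarrow> bool) \<Rightarrow> bool" where
  "const_row_weight m n M = (\<exists>w. \<forall>x < m. card {y. y < n \<and> M x y} = w)"

definition dmset :: "nat \<Rightarrow> nat \<Rightarrow> (nat \<Rightarrow> nat \<Rightarrow> nat set) \<Rightarrow> nat \<Rightarrow> nat \<Rightarrow> nat multiset" where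
  "dmset r L E i j = image_mset (\<lambda>(l, e, e'). (e + r - e') mod r)
     (mset_set {(l, e, e'). l < L \<and> e \<in> E i l \<and> e' \<in> E j l \<and> (i = j \<longrightarrow> e \<noteq> e')})"

definition multiplicity_free :: "'a multiset \<Rightarrow> bool" where
  "multiplicity_free M = (\<forall>x. count M x \<le> 1)"

end

theory Submission
  imports Defs
begin

(* Every cycle has length at least 4, so girth \<ge> 6 says that no two rows and two columns of H
   meet in four ones. In block coordinates, rows i r + a, j r + a' and columns l r + b, l' r + b'
   form such a rectangle iff b - a, b' - a, b - a', b' - a' lie in E i l, E i l', E j l, E j l'.
   The triples (l, b - a, b - a') and (l', b' - a, b' - a') are then distinct and both contribute
   the difference a' - a to d_ij; conversely, two triples of d_ij with a common difference d give
   such a rectangle with a = 0 and a' = d. *)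

definition has_rectangle :: "nat \<Rightarrow> nat \<Rightarrow> (nat \<Rightarrow> nat \<Rightarrow> bool) \<Rightarrow> bool" where
  "has_rectangle m n M \<longleftrightarrow> (\<exists>x x' y y'. x < m \<and> x' < m \<and> y < n \<and> y' < n \<and> x \<noteq> x' \<and> y \<noteq> y' \<and>
     M x y \<and> M x y' \<and> M x' y \<and> M x' y')"

lemma less_2_nat_cases: "(\<forall>k<(2::nat). P k) \<longleftrightarrow> P 0 \<and> P 1"
  by (auto simp: numeral_2_eq_2 less_Suc_eq)

lemma not_is_cycle_1: "\<not> is_cycle m n M 1 ps"
proof
  assume c: "is_cycle m n M 1 ps"
  then have "length ps = 3" by (simp add: is_cycle_def)
  then obtain a b c where "ps = [a, b, c]"
    by (auto simp: numeral_3_eq_3 length_Suc_conv)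
  with c show False
    by (auto simp: is_cycle_def same_row_def same_col_def less_2_nat_cases)
qed

lemma is_cycle_two_le:
  assumes "is_cycle m n M s ps"
  shows "2 \<le> s"
proof -
  have "s \<noteq> 1" using assms not_is_cycle_1 by blast
  moreover have "1 \<le> s" using assms by (simp add: is_cycle_def)
  ultimately show ?thesis by linarith
qed

lemma less_4_nat_cases: "(\<forall>k<(4::nat). P k) \<longleftrightarrow> P 0 \<and> P 1 \<and> P 2 \<and> P 3"
  by (auto simp: eval_nat_numeral less_Suc_eq)

lemma is_cycle_2_iff_has_rectangle: "(\<exists>ps. is_cycle m n M 2 ps) \<longleftrightarrow> has_rectangle m n M"
proof
  assume "\<exists>ps. is_cycle m n M 2 ps"
  then obtain ps where c: "is_cycle m n M 2 ps" ..
  then have "length ps = 5" by (simp add: is_cycle_def)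
  then obtain p0 p1 p2 p3 p4 where "ps = [p0, p1, p2, p3, p4]"
    by (auto simp: eval_nat_numeral length_Suc_conv)
  with c show "has_rectangle m n M"
    unfolding is_cycle_def has_rectangle_def same_row_def same_col_def
    by (auto simp: less_4_nat_cases) blast+
next
  assume "has_rectangle m n M"
  then obtain x x' y y' where "x < m" "x' < m" "y < n" "y' < n" "x \<noteq> x'" "y \<noteq> y'"
     "M x y" "M x y'" "M x' y" "M x' y'" unfolding has_rectangle_def by blast
  then have "is_cycle m n M 2 [(x,y),(x,y'),(x',y'),(x',y),(x,y)]"
    by (simp add: is_cycle_def same_row_def same_col_def less_4_nat_cases)
  then show "\<exists>ps. is_cycle m n M 2 ps" ..
qed

lemma girth_ge_6_iff_no_rectangle: "girth m n M \<ge> 6 \<longleftrightarrow> \<not> has_rectangle m n M"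
proof -
  have "girth m n M \<ge> 6 \<longleftrightarrow> (\<forall>s. (\<exists>ps. is_cycle m n M s ps) \<longrightarrow> 6 \<le> enat (2 * s))"
    unfolding girth_def le_Inf_iff by blast
  also have "\<dots> \<longleftrightarrow> (\<forall>s. (\<exists>ps. is_cycle m n M s ps) \<longrightarrow> 3 \<le> s)"
    by (simp add: numeral_eq_enat)
  also have "\<dots> \<longleftrightarrow> \<not> (\<exists>ps. is_cycle m n M 2 ps)"
    using is_cycle_two_le by (metis le_antisym not_less_eq_eq numeral_2_eq_2 numeral_3_eq_3)
  finally show ?thesis
    by (simp add: is_cycle_2_iff_has_rectangle)
qed

lemma multiplicity_free_image_mset_set_iff:
  assumes "finite S"
  shows "multiplicity_free (image_mset f (mset_set S)) \<longleftrightarrow> inj_on f S"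
proof -
  have "card (f -` {v} \<inter> S) \<le> 1 \<longleftrightarrow> (\<forall>a\<in>f -` {v} \<inter> S. \<forall>b\<in>f -` {v} \<inter> S. a = b)" for v
    using assms card_le_Suc0_iff_eq[of "f -` {v} \<inter> S"] by simp
  then show ?thesis
    using assms by (auto simp: multiplicity_free_def count_image_mset inj_on_def)
qed

(* The residue of b - a modulo r; the truncated subtraction is exact as long as a \<le> r. *)
definition sub_mod :: "nat \<Rightarrow> nat \<Rightarrow> nat \<Rightarrow> nat" where
  "sub_mod r b a = (b + r - a) mod r"

lemma int_sub_mod: "a \<le> r \<Longrightarrow> int (sub_mod r b a) = (int b - int a) mod int r"
  by (simp add: sub_mod_def of_nat_mod of_nat_diff flip: diff_add_eq)

lemma sub_mod_less: "0 < r \<Longrightarrow> sub_mod r b a < r"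
  by (simp add: sub_mod_def)

lemma sub_mod_right_cancel:
  assumes "a < r" "a' < r"
  shows "sub_mod r b a = sub_mod r b a' \<longleftrightarrow> a = a'"
proof -
  have "sub_mod r b a = sub_mod r b a' \<longleftrightarrow> (int b - int a) mod int r = (int b - int a') mod int r"
    using assms by (metis int_sub_mod less_imp_le of_nat_eq_iff)
  also have "\<dots> \<longleftrightarrow> int a mod int r = int a' mod int r"
    by (simp add: mod_eq_dvd_iff dvd_diff_commute)
  also have "\<dots> \<longleftrightarrow> a = a'"
    using assms by simp
  finally show ?thesis .
qed

lemma sub_mod_left_cancel:
  assumes "b < r" "b' < r" "a \<le> r"
  shows "sub_mod r b a = sub_mod r b' a \<longleftrightarrow> b = b'"
proof -
  have "sub_mod r b a = sub_mod r b' a \<longleftrightarrow> (int b - int a) mod int r = (int b' - int a) mod int r"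
    using assms by (metis int_sub_mod of_nat_eq_iff)
  also have "\<dots> \<longleftrightarrow> int b mod int r = int b' mod int r"
    by (simp add: mod_eq_dvd_iff)
  also have "\<dots> \<longleftrightarrow> b = b'"
    using assms by simp
  finally show ?thesis .
qed

lemma sub_mod_sub_mod_same_left:
  assumes "a \<le> r" "a' \<le> r" "0 < r"
  shows "sub_mod r (sub_mod r b a) (sub_mod r b a') = sub_mod r a' a"
proof -
  have "int (sub_mod r (sub_mod r b a) (sub_mod r b a'))
      = ((int b - int a) mod int r - (int b - int a') mod int r) mod int r"
    using assms sub_mod_less[of r] by (simp add: int_sub_mod less_imp_le)
  also have "\<dots> = (int a' - int a) mod int r"
    by (simp add: mod_diff_eq)
  also have "\<dots> = int (sub_mod r a' a)"
    using assms by (simp add: int_sub_mod)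
  finally show ?thesis by simp
qed

lemma sub_mod_sub_mod_cancel:
  assumes "e' < r"
  shows "sub_mod r e (sub_mod r e e') = e'"
proof -
  have "int (sub_mod r e (sub_mod r e e')) = (int e - (int e - int e') mod int r) mod int r"
    using assms sub_mod_less[of r] by (simp add: int_sub_mod less_imp_le)
  also have "\<dots> = int e'"
    using assms by (simp add: mod_diff_right_eq)
  finally show ?thesis by simp
qed

lemma sub_mod_zero_right: "b < r \<Longrightarrow> sub_mod r b 0 = b"
  by (simp add: sub_mod_def)

lemma block_index_less:
  assumes "i < J" "a < r"
  shows "i * r + a < J * (r::nat)"
proof -
  have "i * r + a < Suc i * r" using assms(2) by simp
  also have "\<dots> \<le> J * r" using assms(1) by (intro mult_right_mono) auto
  finally show ?thesis .
qed

lemma Hmat_iff_sub_mod: "Hmat r E x y \<longleftrightarrow> sub_mod r (y mod r) (x mod r) \<in> E (x div r) (y div r)"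
  by (simp add: Hmat_def sub_mod_def)

definition has_block_rectangle :: "nat \<Rightarrow> nat \<Rightarrow> nat \<Rightarrow> (nat \<Rightarrow> nat \<Rightarrow> nat set) \<Rightarrow> bool" where
  "has_block_rectangle r J L E \<longleftrightarrow>
     (\<exists>i j l l' a a' b b'. i < J \<and> j < J \<and> l < L \<and> l' < L \<and> a < r \<and> a' < r \<and> b < r \<and> b' < r \<and>
        (i, a) \<noteq> (j, a') \<and> (l, b) \<noteq> (l', b') \<and>
        sub_mod r b a \<in> E i l \<and> sub_mod r b' a \<in> E i l' \<and> sub_mod r b a' \<in> E j l \<and> sub_mod r b' a' \<in> E j l')"

lemma has_rectangle_Hmat_iff:
  assumes "0 < r"
  shows "has_rectangle (J * r) (L * r) (Hmat r E) \<longleftrightarrow> has_block_rectangle r J L E"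
proof
  assume "has_rectangle (J * r) (L * r) (Hmat r E)"
  then obtain x x' y y' where bounds: "x < J * r" "x' < J * r" "y < L * r" "y' < L * r"
      and "x \<noteq> x'" "y \<noteq> y'" and H: "Hmat r E x y" "Hmat r E x y'" "Hmat r E x' y" "Hmat r E x' y'"
    unfolding has_rectangle_def by blast
  have "(x div r, x mod r) \<noteq> (x' div r, x' mod r)" "(y div r, y mod r) \<noteq> (y' div r, y' mod r)"
    using \<open>x \<noteq> x'\<close> \<open>y \<noteq> y'\<close> by (metis div_mult_mod_eq prod.inject)+
  moreover have "x div r < J" "x' div r < J" "y div r < L" "y' div r < L"
    using bounds by (simp_all only: less_mult_imp_div_less)
  moreover have "x mod r < r" "x' mod r < r" "y mod r < r" "y' mod r < r"
    using assms by simp_all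
  moreover note H[unfolded Hmat_iff_sub_mod]
  ultimately show "has_block_rectangle r J L E"
    unfolding has_block_rectangle_def by blast
next
  assume "has_block_rectangle r J L E"
  then obtain i j l l' a a' b b' where ij: "i < J" "j < J" "l < L" "l' < L"
      and ab: "a < r" "a' < r" "b < r" "b' < r" and "(i, a) \<noteq> (j, a')" "(l, b) \<noteq> (l', b')"
      and entries: "sub_mod r b a \<in> E i l" "sub_mod r b' a \<in> E i l'" "sub_mod r b a' \<in> E j l" "sub_mod r b' a' \<in> E j l'"
    unfolding has_block_rectangle_def by blast
  have block: "(k * r + c) div r = k" "(k * r + c) mod r = c" if "c < r" for k c
    using that by simp_all
  have "i * r + a \<noteq> j * r + a'" "l * r + b \<noteq> l' * r + b'"
    using \<open>(i, a) \<noteq> (j, a')\<close> \<open>(l, b) \<noteq> (l', b')\<close> ab block by metis+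
  moreover have "i * r + a < J * r" "j * r + a' < J * r" "l * r + b < L * r" "l' * r + b' < L * r"
    using ij ab by (simp_all only: block_index_less)
  moreover have "Hmat r E (i * r + a) (l * r + b)" "Hmat r E (i * r + a) (l' * r + b')"
      "Hmat r E (j * r + a') (l * r + b)" "Hmat r E (j * r + a') (l' * r + b')"
    using entries ab by (simp_all only: Hmat_iff_sub_mod block)
  ultimately show "has_rectangle (J * r) (L * r) (Hmat r E)"
    unfolding has_rectangle_def by blast
qed

definition diff_triples :: "nat \<Rightarrow> (nat \<Rightarrow> nat \<Rightarrow> nat set) \<Rightarrow> nat \<Rightarrow> nat \<Rightarrow> (nat \<times> nat \<times> nat) set" where
  "diff_triples L E i j = {(l, e, e'). l < L \<and> e \<in> E i l \<and> e' \<in> E j l \<and> (i = j \<longrightarrow> e \<noteq> e')}"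

lemma dmset_eq_image_diff_triples:
  "dmset r L E i j = image_mset (\<lambda>(l, e, e'). sub_mod r e e') (mset_set (diff_triples L E i j))"
  by (simp add: dmset_def diff_triples_def sub_mod_def)

lemma has_block_rectangle_iff_not_inj_on:
  assumes "0 < r" and E_range: "\<forall>j<J. \<forall>l<L. E j l \<subseteq> {..<r}"
  shows "has_block_rectangle r J L E \<longleftrightarrow>
    (\<exists>i<J. \<exists>j<J. \<not> inj_on (\<lambda>(l, e, e'). sub_mod r e e') (diff_triples L E i j))"
proof
  assume "has_block_rectangle r J L E"
  then obtain i j l l' a a' b b' where ij: "i < J" "j < J" and "l < L" "l' < L"
      and ab: "a < r" "a' < r" "b < r" "b' < r" and "(i, a) \<noteq> (j, a')" "(l, b) \<noteq> (l', b')"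
      and "sub_mod r b a \<in> E i l" "sub_mod r b' a \<in> E i l'" "sub_mod r b a' \<in> E j l" "sub_mod r b' a' \<in> E j l'"
    unfolding has_block_rectangle_def by blast
  then have "(l, sub_mod r b a, sub_mod r b a') \<in> diff_triples L E i j"
    and "(l', sub_mod r b' a, sub_mod r b' a') \<in> diff_triples L E i j"
    and "(l, sub_mod r b a, sub_mod r b a') \<noteq> (l', sub_mod r b' a, sub_mod r b' a')"
    by (auto simp: diff_triples_def sub_mod_right_cancel sub_mod_left_cancel)
  moreover have "sub_mod r (sub_mod r b a) (sub_mod r b a') = sub_mod r (sub_mod r b' a) (sub_mod r b' a')"
    using ab assms(1) by (simp add: sub_mod_sub_mod_same_left)
  ultimately show "\<exists>i<J. \<exists>j<J. \<not> inj_on (\<lambda>(l, e, e'). sub_mod r e e') (diff_triples L E i j)"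
    using ij unfolding inj_on_def by fastforce
next
  assume "\<exists>i<J. \<exists>j<J. \<not> inj_on (\<lambda>(l, e, e'). sub_mod r e e') (diff_triples L E i j)"
  then obtain i j l e1 e3 l' e2 e4 where ij: "i < J" "j < J"
      and t: "(l, e1, e3) \<in> diff_triples L E i j" "(l', e2, e4) \<in> diff_triples L E i j"
      and "(l, e1, e3) \<noteq> (l', e2, e4)" and same_diff: "sub_mod r e1 e3 = sub_mod r e2 e4"
    unfolding inj_on_def by fastforce
  define d where "d = sub_mod r e1 e3"
  \<comment> \<open>the rectangle has a = 0, a' = d, b = e1, b' = e2\<close>
  from t have mem: "l < L" "l' < L" "e1 \<in> E i l" "e3 \<in> E j l" "e2 \<in> E i l'" "e4 \<in> E j l'"
    and diag: "i = j \<Longrightarrow> e1 \<noteq> e3"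
    by (auto simp: diff_triples_def)
  have lt: "e1 < r" "e2 < r" "e3 < r" "e4 < r"
    using mem E_range ij by auto
  have e3: "sub_mod r e1 d = e3"
    using lt by (simp add: d_def sub_mod_sub_mod_cancel)
  have e4: "sub_mod r e2 d = e4"
    using lt by (simp add: d_def same_diff sub_mod_sub_mod_cancel)
  have "(i, 0) \<noteq> (j, d)"
  proof
    assume "(i, 0) = (j, d)"
    then show False
      using diag e3 lt(1) by (simp add: sub_mod_zero_right)
  qed
  moreover have "(l, e1) \<noteq> (l', e2)"
    using \<open>(l, e1, e3) \<noteq> (l', e2, e4)\<close> e3 e4 by auto
  moreover have "d < r"
    using assms(1) by (simp add: d_def sub_mod_less)
  moreover have "sub_mod r e1 0 \<in> E i l" "sub_mod r e2 0 \<in> E i l'"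
      "sub_mod r e1 d \<in> E j l" "sub_mod r e2 d \<in> E j l'"
    using mem lt e3 e4 by (simp_all add: sub_mod_zero_right)
  ultimately show "has_block_rectangle r J L E"
    unfolding has_block_rectangle_def using ij mem lt assms(1) by blast
qed

theorem theorem11:
  fixes r J L :: nat and E :: "nat \<Rightarrow> nat \<Rightarrow> nat set"
  assumes "r \<ge> 1" and "J \<ge> 1" and "L \<ge> 1"
    and "\<forall>j < J. \<forall>l < L. E j l \<subseteq> {..<r} \<and> card (E j l) \<le> 2"
    and "const_col_weight (J * r) (L * r) (Hmat r E)"
    and "const_row_weight (J * r) (L * r) (Hmat r E)"
  shows "girth (J * r) (L * r) (Hmat r E) \<ge> 6 \<longleftrightarrow>
         (\<forall>i < J. \<forall>j < J. multiplicity_free (dmset r L E i j))"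
proof -
  have r: "0 < r"
    using assms(1) by simp
  have E_range: "\<forall>j<J. \<forall>l<L. E j l \<subseteq> {..<r}"
    using assms(4) by blast
  have finite: "finite (diff_triples L E i j)" if "i < J" "j < J" for i j
  proof (rule finite_subset)
    show "diff_triples L E i j \<subseteq> {..<L} \<times> {..<r} \<times> {..<r}"
      using E_range that by (auto simp: diff_triples_def)
  qed simp
  have "girth (J * r) (L * r) (Hmat r E) \<ge> 6 \<longleftrightarrow> \<not> has_rectangle (J * r) (L * r) (Hmat r E)"
    by (rule girth_ge_6_iff_no_rectangle)
  also have "\<dots> \<longleftrightarrow> \<not> has_block_rectangle r J L E"
    using has_rectangle_Hmat_iff[OF r] by (rule arg_cong)
  also have "\<dots> \<longleftrightarrow> (\<forall>i<J. \<forall>j<J. inj_on (\<lambda>(l, e, e'). sub_mod r e e') (diff_triples L E i j))"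
    using has_block_rectangle_iff_not_inj_on[OF r E_range] by blast
  also have "\<dots> \<longleftrightarrow> (\<forall>i<J. \<forall>j<J. multiplicity_free (dmset r L E i j))"
    using finite multiplicity_free_image_mset_set_iff unfolding dmset_eq_image_diff_triples by blast
  finally show ?thesis .
qed

end
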